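(* If $\lambda_1<a$, $1<q<p$ and $b>0$, then for any fixed $\Lambda>0$ there exists $t_0=t_0(\Lambda)>0$ such that $I^+_{\lambda,s}(t\varphi_1)<0$ for all $t\ge t_0$ and all $0<\lambda<\Lambda$.
   Context: $\Omega\subset\mathbb{R}^N$ bounded smooth domain, $s\in(0,1)$, $p>1$, $N>sp$, $p_s^*=\frac{Np}{N-sp}$. $X_p^s=\{u\in W^{s,p}(\mathbb{R}^N): u=0 \text{ a.e. in } \mathbb{R}^N\setminus\Omega\}$ with norm $\|u\|_{X_p^s}=\big(\int_{\mathbb{R}^{2N}}\frac{|u(x)-u(y)|^p}{|x-y|^{N+sp}}dxdy\big)^{1/p}$. $\lambda_1=\inf\{\|u\|_{X_p^s}^p:u\in X_p^s,\|u\|_{L^p(\Omega)}=1\}$ is the first eigenvalue of the fractional $p$-Laplacian $(-\Delta)^s_p$ on $X_p^s$, and $\varphi_1$ the associated positive, $L^p$-normalized eigenfunction. $I^+_{\lambda,s}(u)=\frac1p\|u\|_{X_p^s}^p+\frac\lambda q\int_\Omega|u^+|^q-\frac ap\int_\Omega|u^+|^p-\frac{b}{p_s^*}\int_\Omega(u^+)^{p_s^*}$, $u^+=\max\{u,0\}$. *)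

theory Defs
  imports "HOL-Analysis.Analysis"
begin

text \<open>Points of R^N are vectors of type real^'n, N = CARD('n).\<close>

definition crit_exp :: "real \<Rightarrow> real \<Rightarrow> real \<Rightarrow> real" where
  "crit_exp N s p = N * p / (N - s * p)"

definition gagliardo :: "real \<Rightarrow> real \<Rightarrow> (real^'n \<Rightarrow> real) \<Rightarrow> ennreal" where
  "gagliardo s p u =
     (\<integral>\<^sup>+ z. ennreal (\<bar>u (fst z) - u (snd z)\<bar> powr p
                 / norm (fst z - snd z) powr (real CARD('n) + s * p)) \<partial>(lborel \<Otimes>\<^sub>M lborel))"

definition Xsp :: "real \<Rightarrow> real \<Rightarrow> (real^'n) set \<Rightarrow> (real^'n \<Rightarrow> real) set" where
  "Xsp s p \<Omega> = {u. u \<in> borel_measurable lborel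
      \<and> (\<integral>\<^sup>+ x. ennreal (\<bar>u x\<bar> powr p) \<partial>lborel) < \<infinity>
      \<and> gagliardo s p u < \<infinity>
      \<and> (AE x in lborel. x \<notin> \<Omega> \<longrightarrow> u x = 0)}"

definition Xnorm_pow :: "real \<Rightarrow> real \<Rightarrow> (real^'n \<Rightarrow> real) \<Rightarrow> real" where
  "Xnorm_pow s p u = enn2real (gagliardo s p u)"

definition Lint_pow :: "real \<Rightarrow> (real^'n) set \<Rightarrow> (real^'n \<Rightarrow> real) \<Rightarrow> real" where
  "Lint_pow r \<Omega> u = (LINT x:\<Omega>|lborel. \<bar>u x\<bar> powr r)"

definition lambda1 :: "real \<Rightarrow> real \<Rightarrow> (real^'n) set \<Rightarrow> real" where
  "lambda1 s p \<Omega> = Inf {Xnorm_pow s p u | u. u \<in> Xsp s p \<Omega> \<and> Lint_pow p \<Omega> u = 1}"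

definition frac_eigenfunction ::
  "real \<Rightarrow> real \<Rightarrow> (real^'n) set \<Rightarrow> real \<Rightarrow> (real^'n \<Rightarrow> real) \<Rightarrow> bool" where
  "frac_eigenfunction s p \<Omega> \<mu> \<phi> \<longleftrightarrow> \<phi> \<in> Xsp s p \<Omega> \<and> (\<exists>x. \<phi> x \<noteq> 0) \<and>
     (\<forall>v \<in> Xsp s p \<Omega>.
        (\<integral> z. \<bar>\<phi> (fst z) - \<phi> (snd z)\<bar> powr (p - 2) * (\<phi> (fst z) - \<phi> (snd z))
              * (v (fst z) - v (snd z)) / norm (fst z - snd z) powr (real CARD('n) + s * p)
           \<partial>(lborel \<Otimes>\<^sub>M lborel))
        = \<mu> * (LINT x:\<Omega>|lborel. \<bar>\<phi> x\<bar> powr (p - 2) * \<phi> x * v x))"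

definition I_plus :: "real \<Rightarrow> real \<Rightarrow> real \<Rightarrow> real \<Rightarrow> real \<Rightarrow> real \<Rightarrow> (real^'n) set
    \<Rightarrow> (real^'n \<Rightarrow> real) \<Rightarrow> real" where
  "I_plus s p q a b lam \<Omega> u =
     Xnorm_pow s p u / p
     + lam / q * (LINT x:\<Omega>|lborel. \<bar>max (u x) 0\<bar> powr q)
     - a / p * (LINT x:\<Omega>|lborel. \<bar>max (u x) 0\<bar> powr p)
     - b / crit_exp (real CARD('n)) s p
         * (LINT x:\<Omega>|lborel. max (u x) 0 powr crit_exp (real CARD('n)) s p)"

end

theory Submission
  imports Defs
begin

text \<open>Along the ray \<open>t \<phi>\<^sub>1\<close> the Gagliardo term and the \<open>L\<^sup>p\<close> term are both homogeneous of
  degree \<open>p\<close>, and the eigenvalue equation tested with \<open>\<phi>\<^sub>1\<close> itself shows that together they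
  contribute \<open>t\<^sup>p (\<lambda>\<^sub>1 - a) / p < 0\<close>. The critical term is nonpositive and the sublinear
  term is at most \<open>t\<^sup>q \<Lambda> / q \<integral> \<phi>\<^sub>1\<^sup>q\<close>; since \<open>q < p\<close>, the negative \<open>t\<^sup>p\<close> term wins for large
  \<open>t\<close>, uniformly in \<open>\<lambda> < \<Lambda>\<close>.\<close>

lemma gagliardo_integrand_measurable:
  fixes u :: "real^'n \<Rightarrow> real"
  assumes "u \<in> borel_measurable lborel"
  shows "(\<lambda>z. \<bar>u (fst z) - u (snd z)\<bar> powr p / norm (fst z - snd z) powr c)
           \<in> borel_measurable (lborel \<Otimes>\<^sub>M lborel)"
  using assms by measurable

lemma abs_powr_minus_two_mult_self:
  fixes d p :: real
  shows "\<bar>d\<bar> powr (p - 2) * d * d = \<bar>d\<bar> powr p"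
proof (cases "d = 0")
  case False
  then have "\<bar>d\<bar> powr 2 = d * d"
    by (simp add: powr_numeral power2_eq_square abs_mult_self_eq)
  then have "\<bar>d\<bar> powr (p - 2) * d * d = \<bar>d\<bar> powr (p - 2) * \<bar>d\<bar> powr 2"
    by (simp only: mult.assoc)
  also have "\<dots> = \<bar>d\<bar> powr (p - 2 + 2)"
    by (rule powr_add[symmetric])
  finally show ?thesis
    by simp
qed simp

lemma crit_exp_pos:
  assumes "0 < s" "0 < p" "s * p < N"
  shows "0 < crit_exp N s p"
proof -
  have "0 < N"
    using assms mult_pos_pos[of s p] by linarith
  then show ?thesis
    using assms unfolding crit_exp_def by simp
qed

lemma Xnorm_pow_scale:
  fixes u :: "real^'n \<Rightarrow> real"
  assumes "u \<in> borel_measurable lborel" "0 < t"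
  shows "Xnorm_pow s p (\<lambda>x. t * u x) = t powr p * Xnorm_pow s p u"
proof -
  have "gagliardo s p (\<lambda>x. t * u x)
      = (\<integral>\<^sup>+ z. ennreal (t powr p) * ennreal (\<bar>u (fst z) - u (snd z)\<bar> powr p
           / norm (fst z - snd z) powr (real CARD('n) + s * p)) \<partial>(lborel \<Otimes>\<^sub>M lborel))"
    unfolding gagliardo_def
    using assms(2)
    by (intro nn_integral_cong)
       (simp add: right_diff_distrib[symmetric] abs_mult powr_mult ennreal_mult[symmetric])
  also have "\<dots> = ennreal (t powr p) * gagliardo s p u"
    unfolding gagliardo_def
    by (rule nn_integral_cmult) (use gagliardo_integrand_measurable[OF assms(1)] in measurable)
  finally show ?thesis
    unfolding Xnorm_pow_def by (simp add: enn2real_mult)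
qed

lemma set_integral_pos_part_powr_scale:
  fixes u :: "real^'n \<Rightarrow> real"
  assumes "0 < t"
  shows "(LINT x:\<Omega>|lborel. \<bar>max (t * u x) 0\<bar> powr r)
       = t powr r * (LINT x:\<Omega>|lborel. \<bar>max (u x) 0\<bar> powr r)"
proof -
  have "max (t * u x) 0 = t * max (u x) 0" for x
    using assms by (simp add: max_def mult_le_0_iff)
  then have "\<bar>max (t * u x) 0\<bar> powr r = t powr r * \<bar>max (u x) 0\<bar> powr r" for x
    using assms by (simp add: abs_mult powr_mult)
  then show ?thesis
    by simp
qed

lemma set_integral_pos_part_powr_nonneg:
  fixes u :: "real^'n \<Rightarrow> real"
  shows   "0 \<le> (LINT x:\<Omega>|lborel. \<bar>max (u x) 0\<bar> powr r)"
  unfolding set_lebesgue_integral_def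
  by (intro integral_nonneg_AE) (auto simp: indicator_def)

lemma set_integral_pos_part_powr_eq_Lint_pow:
  fixes u :: "real^'n \<Rightarrow> real"
  assumes "\<Omega> \<in> sets lborel" "u \<in> borel_measurable lborel"
    and "AE x in lborel. x \<in> \<Omega> \<longrightarrow> u x > 0"
  shows "(LINT x:\<Omega>|lborel. \<bar>max (u x) 0\<bar> powr r) = Lint_pow r \<Omega> u"
  unfolding Lint_pow_def set_lebesgue_integral_def
proof (rule integral_cong_AE)
  show "(\<lambda>x. indicat_real \<Omega> x *\<^sub>R \<bar>max (u x) 0\<bar> powr r) \<in> borel_measurable lborel"
       "(\<lambda>x. indicat_real \<Omega> x *\<^sub>R \<bar>u x\<bar> powr r) \<in> borel_measurable lborel"
    using assms(1,2) by measurable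
  show "AE x in lborel. indicat_real \<Omega> x *\<^sub>R \<bar>max (u x) 0\<bar> powr r
                      = indicat_real \<Omega> x *\<^sub>R \<bar>u x\<bar> powr r"
    using assms(3) by eventually_elim (auto simp: indicator_def)
qed

lemma Xnorm_pow_frac_eigenfunction:
  fixes \<phi> :: "real^'n \<Rightarrow> real"
  assumes "frac_eigenfunction s p \<Omega> \<mu> \<phi>"
  shows "Xnorm_pow s p \<phi> = \<mu> * Lint_pow p \<Omega> \<phi>"
proof -
  have X: "\<phi> \<in> Xsp s p \<Omega>"
    using assms unfolding frac_eigenfunction_def by blast
  then have meas: "\<phi> \<in> borel_measurable lborel"
    unfolding Xsp_def by blast
  have "Xnorm_pow s p \<phi> = (\<integral> z. \<bar>\<phi> (fst z) - \<phi> (snd z)\<bar> powr p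
          / norm (fst z - snd z) powr (real CARD('n) + s * p) \<partial>(lborel \<Otimes>\<^sub>M lborel))"
    unfolding Xnorm_pow_def gagliardo_def
    by (rule integral_eq_nn_integral[symmetric])
       (use gagliardo_integrand_measurable[OF meas] in auto)
  also have "\<dots> = (\<integral> z. \<bar>\<phi> (fst z) - \<phi> (snd z)\<bar> powr (p - 2) * (\<phi> (fst z) - \<phi> (snd z))
          * (\<phi> (fst z) - \<phi> (snd z)) / norm (fst z - snd z) powr (real CARD('n) + s * p)
          \<partial>(lborel \<Otimes>\<^sub>M lborel))"
    by (simp add: abs_powr_minus_two_mult_self)
  also have "\<dots> = \<mu> * (LINT x:\<Omega>|lborel. \<bar>\<phi> x\<bar> powr (p - 2) * \<phi> x * \<phi> x)"
    using assms X unfolding frac_eigenfunction_def by blast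
  also have "\<dots> = \<mu> * Lint_pow p \<Omega> \<phi>"
    unfolding Lint_pow_def by (simp add: abs_powr_minus_two_mult_self)
  finally show ?thesis .
qed

lemma I_plus_scale_le:
  fixes u :: "real^'n \<Rightarrow> real"
  assumes "u \<in> borel_measurable lborel" "0 < t" "0 < s" "0 < p" "s * p < real CARD('n)" "0 \<le> b"
  shows "I_plus s p q a b lam \<Omega> (\<lambda>x. t * u x)
     \<le> t powr p / p * (Xnorm_pow s p u - a * (LINT x:\<Omega>|lborel. \<bar>max (u x) 0\<bar> powr p))
       + t powr q * (lam / q) * (LINT x:\<Omega>|lborel. \<bar>max (u x) 0\<bar> powr q)"
proof -
  define C where "C = b / crit_exp (real CARD('n)) s p
    * (LINT x:\<Omega>|lborel. max (t * u x) 0 powr crit_exp (real CARD('n)) s p)"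
  have "0 \<le> C"
    unfolding C_def set_lebesgue_integral_def using crit_exp_pos[OF assms(3-5)] assms(6)
    by (intro mult_nonneg_nonneg integral_nonneg_AE) (auto simp: indicator_def)
  moreover have "I_plus s p q a b lam \<Omega> (\<lambda>x. t * u x)
     = t powr p / p * (Xnorm_pow s p u - a * (LINT x:\<Omega>|lborel. \<bar>max (u x) 0\<bar> powr p))
       + t powr q * (lam / q) * (LINT x:\<Omega>|lborel. \<bar>max (u x) 0\<bar> powr q) - C"
    unfolding I_plus_def C_def Xnorm_pow_scale[OF assms(1,2)] set_integral_pos_part_powr_scale[OF assms(2)]
    by (simp add: field_simps) (simp add: diff_divide_distrib)
  ultimately show ?thesis
    by linarith
qed

lemma powr_eventually_dominates:
  fixes D K p q :: real
  assumes "0 < D" "0 \<le> K" "q < p"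
  shows "\<exists>t0 > 0. \<forall>t \<ge> t0. t powr q * K < t powr p * D"
proof (intro exI conjI allI impI)
  define t0 where "t0 = ((K + 1) / D) powr (1 / (p - q))"
  show "0 < t0"
    unfolding t0_def using assms by simp
  fix t
  assume "t0 \<le> t"
  with \<open>0 < t0\<close> have t: "0 < t" by simp
  have "t0 powr (p - q) = (K + 1) / D"
    unfolding t0_def using assms by (simp add: powr_powr)
  moreover have "t0 powr (p - q) \<le> t powr (p - q)"
    using \<open>t0 \<le> t\<close> \<open>0 < t0\<close> assms(3) by (intro powr_mono2) auto
  ultimately have "(K + 1) / D \<le> t powr (p - q)"
    by simp
  then have "K < t powr (p - q) * D"
    using assms(1) by (simp add: field_simps)
  then have "t powr q * K < t powr q * (t powr (p - q) * D)"
    using t by simp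
  then show "t powr q * K < t powr p * D"
    by (simp add: powr_add[symmetric] mult.assoc[symmetric])
qed

theorem lemma4p5:
  fixes \<Omega> :: "(real^'n) set" and s p q a b \<Lambda> :: real and \<phi>1 :: "real^'n \<Rightarrow> real"
  assumes "open \<Omega>" "bounded \<Omega>" "connected \<Omega>" "\<Omega> \<noteq> {}"
    and "0 < s" "s < 1" "1 < p" "real CARD('n) > s * p"
    and "frac_eigenfunction s p \<Omega> (lambda1 s p \<Omega>) \<phi>1"
    and "AE x in lborel. x \<in> \<Omega> \<longrightarrow> \<phi>1 x > 0"
    and "Lint_pow p \<Omega> \<phi>1 = 1"
    and "lambda1 s p \<Omega> < a" "1 < q" "q < p" "0 < b"
    and "0 < \<Lambda>"
  shows "\<exists>t0 > 0. \<forall>t \<ge> t0. \<forall>lam. 0 < lam \<and> lam < \<Lambda> \<longrightarrow>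
           I_plus s p q a b lam \<Omega> (\<lambda>x. t * \<phi>1 x) < 0"
proof -
  have meas: "\<phi>1 \<in> borel_measurable lborel"
    using assms(9) unfolding frac_eigenfunction_def Xsp_def by blast
  have norm_eq: "Xnorm_pow s p \<phi>1 = lambda1 s p \<Omega>"
    using Xnorm_pow_frac_eigenfunction[OF assms(9)] assms(11) by simp
  have Lp_eq: "(LINT x:\<Omega>|lborel. \<bar>max (\<phi>1 x) 0\<bar> powr p) = 1"
    using set_integral_pos_part_powr_eq_Lint_pow[OF _ meas assms(10)] assms(1,11) by simp
  define Q where "Q = (LINT x:\<Omega>|lborel. \<bar>max (\<phi>1 x) 0\<bar> powr q)"
  have "0 \<le> Q"
    unfolding Q_def by (rule set_integral_pos_part_powr_nonneg)
  then have "0 \<le> \<Lambda> / q * Q"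
    using assms(13,16) by simp
  moreover have "0 < (a - lambda1 s p \<Omega>) / p"
    using assms(7,12) by simp
  ultimately obtain t0 where "0 < t0"
    and dom: "\<And>t. t0 \<le> t \<Longrightarrow> t powr q * (\<Lambda> / q * Q) < t powr p * ((a - lambda1 s p \<Omega>) / p)"
    using powr_eventually_dominates[of _ "\<Lambda> / q * Q" q p] assms(14) by blast
  show ?thesis
  proof (intro exI[of _ t0] conjI allI impI \<open>0 < t0\<close>)
    fix t lam
    assume "t0 \<le> t" and lam: "0 < lam \<and> lam < \<Lambda>"
    have "I_plus s p q a b lam \<Omega> (\<lambda>x. t * \<phi>1 x)
        \<le> t powr q * (lam / q * Q) - t powr p * ((a - lambda1 s p \<Omega>) / p)"
      using I_plus_scale_le[OF meas, of t s p b q a lam \<Omega>] \<open>0 < t0\<close> \<open>t0 \<le> t\<close> assms(5,7,8,15)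
      unfolding norm_eq Lp_eq Q_def by (simp add: field_simps)
    also have "\<dots> \<le> t powr q * (\<Lambda> / q * Q) - t powr p * ((a - lambda1 s p \<Omega>) / p)"
      using lam assms(13) \<open>0 \<le> Q\<close>
      by (intro diff_right_mono mult_left_mono mult_right_mono divide_right_mono) auto
    also have "\<dots> < 0"
      using dom[OF \<open>t0 \<le> t\<close>] by simp
    finally show "I_plus s p q a b lam \<Omega> (\<lambda>x. t * \<phi>1 x) < 0" .
  qed
qed

end
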